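(* Suppose Assumption 1 holds with constant $\alpha>0$, and fix $0\le h<H$. For any policy $\pi\in\varPi$, any partial trajectory $\tau_h\in(\mathscr O\times\mathscr A)^h$ with $\pi(\tau_h)>0$, any $\theta\in\varTheta$ and any $\mathbf w\in\mathbb R^{\mathscr O}$, $$\sum_{\tau_{-h}\in(\mathscr O\times\mathscr A)^{H-h}}\pi(\tau_{-h}\mid\tau_h)\,\big|\mathbf B^\theta_{H:h+1}(\tau_{-h})\mathbf w\big|\le\frac{\sqrt S}{\alpha}\|\mathbf w\|_1.$$
   Context: A POMDP with parameter $\theta$ has finite state set $\mathscr S$ ($|\mathscr S|=S$), action set $\mathscr A$, observation set $\mathscr O$ ($|\mathscr O|=O$), horizon $H$, transition kernels $T_h^\theta:\mathscr S\times\mathscr A\to\Delta(\mathscr S)$ ($h\in[H-1]$) and observation kernels $Z^\theta_h:\mathscr S\to\Delta(\mathscr O)$ ($h\in[H]$); $\varTheta$ is the set of parameters. $\mathbb T^\theta_{h,a}$ is the $S\times S$ matrix with entries $\mathbb T^\theta_{h,a}(s',s)=T_h^\theta(s'\mid s,a)$; $\mathbb Z^\theta_h$ is the $O\times S$ matrix with entries $\mathbb Z_h^\theta(o,s)=Z_h^\theta(o\mid s)$; $\mathbb Z_h^{\theta\dagger}$ is its Moore–Penrose pseudoinverse; $\mathrm{diag}(\mathbb Z_h^\theta(o,\cdot))$ is the diagonal matrix with diagonal $(Z^\theta_h(o\mid s))_s$. Observable operators: $\mathbf B_h^\theta(a,o)=\mathbb Z^\theta_{h+1}\mathbb T^\theta_{h,a}\mathrm{diag}(\mathbb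 Z_h^\theta(o,\cdot))\mathbb Z_h^{\theta\dagger}$ for $h\in[H-1]$. For a full trajectory $\tau=(o_t,a_t)_{t=1}^H$, $\tau_h=(o_t,a_t)_{t=1}^h$ and $\tau_{-h}=(o_t,a_t)_{t=h+1}^H$; define the row vector $\mathbf B^\theta_{H:h+1}(\tau_{-h})=\mathbf e_{o_H}^T$ if $h=H-1$, and $\mathbf B^\theta_{H:h+1}(\tau_{-h})=\mathbf e_{o_H}^T\mathbf B^\theta_{H-1}(a_{H-1},o_{H-1})\cdots\mathbf B^\theta_{h+1}(a_{h+1},o_{h+1})$ if $h<H-1$. A deterministic policy $\pi=(\pi_t)_{t=1}^H$ has $\pi_t:(\mathscr O\times\mathscr A)^{t-1}\times\mathscr O\to\mathscr A$; $\varPi$ is the set of such policies; $\pi(\tau_h)=\prod_{t=1}^h\mathbf 1\{\pi_t(\tau_{t-1},o_t)=a_t\}$ (equal to $1$ for $h=0$), and $\pi(\tau_{-h}\mid\tau_h)=\pi(\tau_h,\tau_{-h})/\pi(\tau_h)$ when $\pi(\tau_h)>0$. Assumption 1 (undercomplete, $\alpha$-weakly revealing): $O\ge S$, and for all $\theta\in\varTheta$ and all $h\in[H]$ the smallest singular value satisfies $\sigma_{\min}(\mathbb Z_h^\theta)\ge\alpha$. *)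

theory Defs
  imports "HOL-Analysis.Analysis"
begin

definition pinv :: "real^'n^'m \<Rightarrow> real^'m^'n" where
  "pinv A = (THE X. A ** X ** A = A \<and> X ** A ** X = X
                   \<and> transpose (A ** X) = A ** X \<and> transpose (X ** A) = X ** A)"

definition sigma_min :: "real^'n^'m \<Rightarrow> real" where
  "sigma_min A = sqrt (Min {l. \<exists>v. v \<noteq> 0 \<and> (transpose A ** A) *v v = l *\<^sub>R v})"

text \<open>Kernels: T th h s a s' = T_h(s' | s, a); Z th h s o = Z_h(o | s).\<close>
definition Tmat :: "('p \<Rightarrow> nat \<Rightarrow> 's \<Rightarrow> 'a \<Rightarrow> 's \<Rightarrow> real) \<Rightarrow> 'p \<Rightarrow> nat \<Rightarrow> 'a
                    \<Rightarrow> real^'s::finite^'s" where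
  "Tmat T th h a = (\<chi> s' s. T th h s a s')"

definition Zmat :: "('p \<Rightarrow> nat \<Rightarrow> 's \<Rightarrow> 'o \<Rightarrow> real) \<Rightarrow> 'p \<Rightarrow> nat
                    \<Rightarrow> real^'s::finite^'o::finite" where
  "Zmat Z th h = (\<chi> ob s. Z th h s ob)"

definition Zdiag :: "('p \<Rightarrow> nat \<Rightarrow> 's \<Rightarrow> 'o \<Rightarrow> real) \<Rightarrow> 'p \<Rightarrow> nat \<Rightarrow> 'o
                    \<Rightarrow> real^'s::finite^'s" where
  "Zdiag Z th h ob = (\<chi> i j. if i = j then Z th h i ob else 0)"

definition Bop :: "('p \<Rightarrow> nat \<Rightarrow> 's::finite \<Rightarrow> 'a \<Rightarrow> 's \<Rightarrow> real)
                 \<Rightarrow> ('p \<Rightarrow> nat \<Rightarrow> 's \<Rightarrow> 'o::finite \<Rightarrow> real) \<Rightarrow> 'p \<Rightarrow> nat \<Rightarrow> 'a \<Rightarrow> 'o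
                 \<Rightarrow> real^'o^'o" where
  "Bop T Z th h a ob = Zmat Z th (h+1) ** Tmat T th h a ** Zdiag Z th h ob ** pinv (Zmat Z th h)"

text \<open>Bprod T Z th t [(o_t,a_t),(o_{t+1},a_{t+1}),...,(o_k,a_k)] = B_k(a_k,o_k) ... B_t(a_t,o_t).\<close>
fun Bprod :: "('p \<Rightarrow> nat \<Rightarrow> 's::finite \<Rightarrow> 'a \<Rightarrow> 's \<Rightarrow> real)
                 \<Rightarrow> ('p \<Rightarrow> nat \<Rightarrow> 's \<Rightarrow> 'o::finite \<Rightarrow> real) \<Rightarrow> 'p \<Rightarrow> nat \<Rightarrow> ('o \<times> 'a) list
                 \<Rightarrow> real^'o^'o" where
  "Bprod T Z th t [] = mat 1"
| "Bprod T Z th t ((ob, a) # xs) = Bprod T Z th (Suc t) xs ** Bop T Z th t a ob"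

text \<open>Row vector B_{H:h+1}(tau_{-h}) for tau_{-h} = [(o_{h+1},a_{h+1}),...,(o_H,a_H)]:
  e_{o_H}^T B_{H-1}(a_{H-1},o_{H-1}) ... B_{h+1}(a_{h+1},o_{h+1}).\<close>
definition Brow :: "('p \<Rightarrow> nat \<Rightarrow> 's::finite \<Rightarrow> 'a \<Rightarrow> 's \<Rightarrow> real)
                 \<Rightarrow> ('p \<Rightarrow> nat \<Rightarrow> 's \<Rightarrow> 'o::finite \<Rightarrow> real) \<Rightarrow> 'p \<Rightarrow> nat \<Rightarrow> ('o \<times> 'a) list
                 \<Rightarrow> real^'o" where
  "Brow T Z th h tm = (axis (fst (last tm)) 1) v* Bprod T Z th (h+1) (butlast tm)"

text \<open>Deterministic policy: pol t hist ob = pi_t(tau_{t-1}, o_t), hist of length t-1.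
  pol_prob pol tau = prod_{t=1}^{|tau|} 1{pi_t(tau_{t-1}, o_t) = a_t}.\<close>
definition pol_prob :: "(nat \<Rightarrow> ('o \<times> 'a) list \<Rightarrow> 'o \<Rightarrow> 'a) \<Rightarrow> ('o \<times> 'a) list \<Rightarrow> real" where
  "pol_prob pol tau = (\<Prod>t\<in>{1..length tau}.
      if pol t (take (t-1) tau) (fst (tau ! (t-1))) = snd (tau ! (t-1)) then 1 else 0)"

definition pol_cond :: "(nat \<Rightarrow> ('o \<times> 'a) list \<Rightarrow> 'o \<Rightarrow> 'a) \<Rightarrow> ('o \<times> 'a) list
                        \<Rightarrow> ('o \<times> 'a) list \<Rightarrow> real" where
  "pol_cond pol tm th = pol_prob pol (th @ tm) / pol_prob pol th"

definition norm1 :: "real^'n \<Rightarrow> real" where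
  "norm1 w = (\<Sum>i\<in>UNIV. \<bar>w $ i\<bar>)"

end

theory Submission
  imports Defs
begin

(* If sigma_min Z_k >= alpha > 0 then Z_k is injective and pinv Z_k ** Z_k = I, so the observable
   operators telescope: for tau_{-h} of length at least 2,
     B_{H:h+1}(tau_{-h}) w = e_{o_H}^T Z_H C(tau_{-h}) (pinv Z_{h+1} w),
   where C(tau_{-h}) is the product of the state-space matrices T_{k,a_k} diag(Z_k(o_k,.)).
   Since sum_o diag(Z_k(o,.)) = I and T_{k,a} is column-stochastic, each factor is an l1-contraction
   on average over the observation o_k (the action a_k being dictated by the policy). Hence the
   weighted sum is at most |pinv Z_{h+1} w|_1 <= sqrt S |pinv Z_{h+1} w|_2 <= sqrt S / alpha |w|_2,
   and |w|_2 <= |w|_1. For h = H - 1 the sum is exactly |w|_1, and alpha <= 1 because the columns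
   of Z_H are probability vectors. *)

lemma inner_mult_mult_eq_gram:
  fixes A :: "real^'n^'m"
  shows "(A *v x) \<bullet> (A *v y) = ((transpose A ** A) *v x) \<bullet> y"
  by (simp add: dot_lmul_matrix flip: matrix_vector_mul_assoc)

lemma inner_symmetric_matrix_vector_mult:
  fixes M :: "real^'n^'n"
  assumes "transpose M = M"
  shows "(M *v x) \<bullet> y = x \<bullet> (M *v y)"
  by (metis assms dot_lmul_matrix transpose_matrix_vector)

lemma quadratic_nonneg_imp_linear_coeff_zero:
  fixes c d :: real
  assumes "\<And>t. 0 \<le> 2 * t * c + t\<^sup>2 * d"
  shows "c = 0"
proof (rule ccontr)
  assume "c \<noteq> 0"
  define s where "s = 1 / (\<bar>d\<bar> + 1)"
  have "s > 0" "s * d < 1"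
    unfolding s_def by (auto simp: field_simps)
  have "0 \<le> 2 * (- c * s) * c + (- c * s)\<^sup>2 * d" by (rule assms)
  also have "\<dots> = c\<^sup>2 * s * (s * d - 2)"
    by (simp add: algebra_simps power2_eq_square)
  also have "\<dots> < 0"
    using \<open>c \<noteq> 0\<close> \<open>s > 0\<close> \<open>s * d < 1\<close> by (intro mult_pos_neg) auto
  finally show False by simp
qed

lemma symmetric_matrix_finite_eigenvalues:
  fixes M :: "real^'n^'n"
  assumes "transpose M = M"
  shows "finite {l. \<exists>v. v \<noteq> 0 \<and> M *v v = l *\<^sub>R v}"
proof -
  define E where "E = {l. \<exists>v. v \<noteq> 0 \<and> M *v v = l *\<^sub>R v}"
  define e where "e l = (SOME v. v \<noteq> 0 \<and> M *v v = l *\<^sub>R v)" for l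
  have e: "e l \<noteq> 0" "M *v e l = l *\<^sub>R e l" if "l \<in> E" for l
    using someI_ex[OF that[unfolded E_def mem_Collect_eq]] unfolding e_def by auto
  have orth: "e l \<bullet> e l' = 0" if "l \<in> E" "l' \<in> E" "l \<noteq> l'" for l l'
  proof -
    have "l * (e l \<bullet> e l') = l' * (e l \<bullet> e l')"
      using inner_symmetric_matrix_vector_mult[OF assms, of "e l" "e l'"] e that by simp
    then show ?thesis
      using that(3) by simp
  qed
  have "pairwise orthogonal (e ` E)"
    using orth by (auto simp: pairwise_def orthogonal_def)
  moreover have "0 \<notin> e ` E"
    using e(1) by fastforce
  ultimately have "finite (e ` E)"
    by (rule independent_bound[OF pairwise_orthogonal_independent, THEN conjunct1])
  moreover have "inj_on e E"
    by (rule inj_onI) (metis e(1) inner_eq_zero_iff orth)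
  ultimately show ?thesis
    unfolding E_def[symmetric] by (rule finite_imageD)
qed

lemma power2_norm_add_scaleR:
  fixes a b :: "'a::real_inner"
  shows "(norm (a + t *\<^sub>R b))\<^sup>2 = (norm a)\<^sup>2 + 2 * t * (a \<bullet> b) + t\<^sup>2 * (norm b)\<^sup>2"
  unfolding power2_norm_eq_inner
  by (simp add: inner_add_left inner_add_right inner_commute[of b a] algebra_simps power2_eq_square)

lemma gram_min_eigenvalue:
  fixes A :: "real^'n^'m"
  obtains mu u where "u \<noteq> 0" "(transpose A ** A) *v u = mu *\<^sub>R u" "0 \<le> mu"
    "\<And>v. mu * (norm v)\<^sup>2 \<le> (norm (A *v v))\<^sup>2"
proof -
  let ?f = "\<lambda>v. (norm (A *v v))\<^sup>2"
  have "sphere (0::real^'n) 1 \<noteq> {}"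
    using norm_axis_1 by (metis dist_0_norm empty_iff mem_sphere)
  moreover have "continuous_on (sphere 0 1) ?f"
    by (intro continuous_intros)
  ultimately obtain u where u: "u \<in> sphere 0 1" and u_min: "\<And>v. v \<in> sphere 0 1 \<Longrightarrow> ?f u \<le> ?f v"
    using continuous_attains_inf[OF compact_sphere] by blast
  define mu where "mu = ?f u"
  have form_nonneg: "0 \<le> ?f v - mu * (norm v)\<^sup>2" for v
  proof (cases "v = 0")
    case False
    then have "mu \<le> ?f (inverse (norm v) *\<^sub>R v)"
      unfolding mu_def by (intro u_min) simp
    also have "\<dots> = ?f v / (norm v)\<^sup>2"
      by (simp add: matrix_vector_mult_scaleR power_divide field_simps)
    finally show ?thesis
      using False by (simp add: field_simps)
  qed simp
  \<comment> \<open>The nonnegative form of \<open>form_nonneg\<close> vanishes at \<open>u\<close>, hence so does its first variation.\<close>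
  have first_variation: "(A *v u) \<bullet> (A *v x) - mu * (u \<bullet> x) = 0" for x
  proof (rule quadratic_nonneg_imp_linear_coeff_zero)
    fix t :: real
    have "0 \<le> ?f (u + t *\<^sub>R x) - mu * (norm (u + t *\<^sub>R x))\<^sup>2" by (rule form_nonneg)
    also have "\<dots> = (?f u - mu * (norm u)\<^sup>2)
        + 2 * t * ((A *v u) \<bullet> (A *v x) - mu * (u \<bullet> x)) + t\<^sup>2 * (?f x - mu * (norm x)\<^sup>2)"
      by (simp add: matrix_vector_right_distrib matrix_vector_mult_scaleR power2_norm_add_scaleR
          algebra_simps)
    also have "?f u - mu * (norm u)\<^sup>2 = 0"
      using u unfolding mu_def by simp
    finally show "0 \<le> 2 * t * ((A *v u) \<bullet> (A *v x) - mu * (u \<bullet> x)) + t\<^sup>2 * (?f x - mu * (norm x)\<^sup>2)"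
      by simp
  qed
  have "((transpose A ** A) *v u - mu *\<^sub>R u) \<bullet> x = 0" for x
    using first_variation[of x] by (simp add: inner_diff_left inner_mult_mult_eq_gram)
  from this[of "(transpose A ** A) *v u - mu *\<^sub>R u"]
  have "(transpose A ** A) *v u = mu *\<^sub>R u"
    by simp
  moreover have "mu * (norm v)\<^sup>2 \<le> ?f v" for v
    using form_nonneg[of v] by simp
  moreover have "u \<noteq> 0" "0 \<le> mu"
    using u unfolding mu_def by auto
  ultimately show ?thesis
    using that by blast
qed

lemma sigma_min_mult_norm_le:
  fixes A :: "real^'n^'m"
  shows "sigma_min A * norm v \<le> norm (A *v v)"
proof -
  let ?E = "{l. \<exists>v. v \<noteq> 0 \<and> (transpose A ** A) *v v = l *\<^sub>R v}"
  obtain mu u where u: "u \<noteq> 0" "(transpose A ** A) *v u = mu *\<^sub>R u"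
    and mu: "0 \<le> mu" "\<And>v. mu * (norm v)\<^sup>2 \<le> (norm (A *v v))\<^sup>2"
    using gram_min_eigenvalue[of A] by metis
  \<comment> \<open>\<open>sigma_min\<close> takes \<open>Min\<close> of the eigenvalue set, which is meaningless unless it is finite.\<close>
  have "finite ?E"
    by (rule symmetric_matrix_finite_eigenvalues) (simp add: matrix_transpose_mul)
  moreover have "mu \<in> ?E"
    using u by blast
  ultimately have "sigma_min A \<le> sqrt mu"
    unfolding sigma_min_def by (simp add: Min_le)
  then have "sigma_min A * norm v \<le> sqrt mu * norm v"
    by (simp add: mult_right_mono)
  also have "\<dots> = sqrt (mu * (norm v)\<^sup>2)"
    by (simp add: real_sqrt_mult)
  also have "\<dots> \<le> norm (A *v v)"
    using real_sqrt_le_mono[OF mu(2)[of v]] by simp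
  finally show ?thesis .
qed

lemma inj_of_sigma_min_pos:
  fixes A :: "real^'n^'m"
  assumes "0 < sigma_min A"
  shows "inj ((*v) A)"
proof (rule injI)
  fix x y assume "A *v x = A *v y"
  then have "sigma_min A * norm (x - y) \<le> 0"
    using sigma_min_mult_norm_le[of A "x - y"] by (simp add: matrix_vector_mult_diff_distrib)
  then show "x = y"
    using assms by (simp add: mult_le_0_iff)
qed

lemma transpose_left_inverse_of_symmetric:
  fixes M G :: "'a::field^'n^'n"
  assumes "transpose M = M" and "G ** M = mat 1"
  shows "transpose G = G"
proof -
  have "transpose G ** M = mat 1"
    using assms matrix_left_right_inverse by (metis matrix_transpose_mul transpose_mat)
  then have "transpose G = (transpose G ** M) ** G"
    using assms(2) matrix_left_right_inverse by (metis matrix_mul_assoc matrix_mul_rid)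
  also have "\<dots> = G"
    using \<open>transpose G ** M = mat 1\<close> by simp
  finally show ?thesis .
qed

lemma pinv_eq_gram_inverse_mult_transpose:
  fixes A :: "real^'n^'m"
  assumes G: "G ** (transpose A ** A) = mat 1"
  shows "pinv A = G ** transpose A"
  unfolding pinv_def
proof (rule the_equality)
  let ?X = "G ** transpose A"
  have XA: "?X ** A = mat 1"
    using G by (simp add: matrix_mul_assoc)
  have "transpose G = G"
    using G by (rule transpose_left_inverse_of_symmetric[rotated]) (simp add: matrix_transpose_mul)
  then have "transpose (A ** ?X) = A ** ?X"
    by (simp add: matrix_transpose_mul matrix_mul_assoc)
  moreover have "A ** ?X ** A = A"
    by (metis XA matrix_mul_assoc matrix_mul_rid)
  ultimately show "A ** ?X ** A = A \<and> ?X ** A ** ?X = ?X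
      \<and> transpose (A ** ?X) = A ** ?X \<and> transpose (?X ** A) = ?X ** A"
    using XA by simp
  fix Y
  assume Y: "A ** Y ** A = A \<and> Y ** A ** Y = Y
      \<and> transpose (A ** Y) = A ** Y \<and> transpose (Y ** A) = Y ** A"
  have "Y ** A = ?X ** (A ** Y ** A)"
    by (metis XA matrix_mul_assoc matrix_mul_lid)
  then have YA: "Y ** A = mat 1"
    using Y XA by simp
  have "(transpose A ** A) ** Y = transpose A ** transpose (A ** Y)"
    using Y by (simp add: matrix_mul_assoc)
  also have "\<dots> = transpose (Y ** A) ** transpose A"
    by (simp add: matrix_transpose_mul matrix_mul_assoc)
  finally have "(transpose A ** A) ** Y = transpose A"
    by (simp add: YA)
  then show "Y = ?X"
    using G by (metis matrix_mul_assoc matrix_mul_lid)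
qed

lemma gram_left_invertible:
  fixes A :: "real^'n^'m"
  assumes "inj ((*v) A)"
  obtains G where "G ** (transpose A ** A) = mat 1"
proof -
  have "x = 0" if "(transpose A ** A) *v x = 0" for x
  proof -
    have "(A *v x) \<bullet> (A *v x) = 0"
      using that by (simp add: inner_mult_mult_eq_gram)
    then show ?thesis
      using assms by (metis injD inner_eq_zero_iff matrix_vector_mult_0_right)
  qed
  then show ?thesis
    using that matrix_left_invertible_ker by blast
qed

lemma pinv_mult_self:
  fixes A :: "real^'n^'m"
  assumes "inj ((*v) A)"
  shows "pinv A ** A = mat 1"
proof -
  obtain G where G: "G ** (transpose A ** A) = mat 1"
    using assms by (rule gram_left_invertible)
  then show ?thesis
    by (simp add: pinv_eq_gram_inverse_mult_transpose matrix_mul_assoc)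
qed

(* A (pinv A) is the orthogonal projection onto the range of A, hence a contraction. *)
lemma norm_mult_pinv_le:
  fixes A :: "real^'n^'m"
  assumes "inj ((*v) A)"
  shows "norm (A *v (pinv A *v w)) \<le> norm w"
proof -
  obtain G where G: "G ** (transpose A ** A) = mat 1"
    using assms by (rule gram_left_invertible)
  define x where "x = pinv A *v w"
  have "(transpose A ** A) ** G = mat 1"
    using G matrix_left_right_inverse by blast
  then have "(transpose A ** A) *v x = transpose A *v w"
    unfolding x_def pinv_eq_gram_inverse_mult_transpose[OF G]
    by (simp add: matrix_vector_mul_assoc matrix_mul_assoc flip: transpose_matrix_vector)
  then have "(norm (A *v x))\<^sup>2 = w \<bullet> (A *v x)"
    by (simp add: power2_norm_eq_inner inner_mult_mult_eq_gram dot_lmul_matrix)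
  also have "\<dots> \<le> norm w * norm (A *v x)"
    by (rule real_inner_class.Cauchy_Schwarz_ineq2[THEN abs_le_D1])
  finally have "norm (A *v x) * norm (A *v x) \<le> norm w * norm (A *v x)"
    by (simp add: power2_eq_square)
  then show ?thesis
    unfolding x_def by (cases "A *v x = 0") (auto simp: x_def)
qed

lemma sigma_min_mult_norm_pinv_le:
  fixes A :: "real^'n^'m"
  assumes "0 < sigma_min A"
  shows "sigma_min A * norm (pinv A *v w) \<le> norm w"
  using sigma_min_mult_norm_le[of A "pinv A *v w"] norm_mult_pinv_le[OF inj_of_sigma_min_pos[OF assms], of w]
  by linarith

lemma norm_le_norm1: "norm (x::real^'n) \<le> norm1 x"
  unfolding norm1_def by (rule norm_le_l1_cart)

lemma norm1_le_sqrt_card_mult_norm: "norm1 (x::real^'n) \<le> sqrt (real CARD('n)) * norm x"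
proof -
  have "norm1 x = (\<Sum>i\<in>UNIV. \<bar>x $ i\<bar> * \<bar>1::real\<bar>)"
    by (simp add: norm1_def)
  also have "\<dots> \<le> L2_set (\<lambda>i. x $ i) UNIV * L2_set (\<lambda>i::'n. 1::real) UNIV"
    by (rule L2_set_mult_ineq)
  also have "\<dots> = norm x * sqrt (real CARD('n))"
    by (simp add: norm_vec_def L2_set_def)
  finally show ?thesis
    by (simp add: mult.commute)
qed

lemma norm1_pinv_le:
  fixes A :: "real^'n^'m"
  assumes "0 < alpha" and "alpha \<le> sigma_min A"
  shows "norm1 (pinv A *v w) \<le> sqrt (real CARD('n)) / alpha * norm1 w"
proof -
  have "alpha * norm (pinv A *v w) \<le> sigma_min A * norm (pinv A *v w)"
    using assms(2) by (rule mult_right_mono) simp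
  also have "\<dots> \<le> norm w"
    using assms by (intro sigma_min_mult_norm_pinv_le) simp
  also have "\<dots> \<le> norm1 w"
    by (rule norm_le_norm1)
  finally have "norm (pinv A *v w) \<le> norm1 w / alpha"
    using assms(1) by (simp add: field_simps)
  have "norm1 (pinv A *v w) \<le> sqrt (real CARD('n)) * norm (pinv A *v w)"
    by (rule norm1_le_sqrt_card_mult_norm)
  also have "\<dots> \<le> sqrt (real CARD('n)) * (norm1 w / alpha)"
    using \<open>norm (pinv A *v w) \<le> norm1 w / alpha\<close> by (rule mult_left_mono) simp
  finally show ?thesis
    by simp
qed

definition column_stochastic :: "real^'n^'m \<Rightarrow> bool" where
  "column_stochastic K \<longleftrightarrow> (\<forall>i j. 0 \<le> K $ i $ j) \<and> (\<forall>j. (\<Sum>i\<in>UNIV. K $ i $ j) = 1)"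

lemma norm1_column_stochastic_mult_le:
  fixes K :: "real^'n^'m"
  assumes "column_stochastic K"
  shows "norm1 (K *v y) \<le> norm1 y"
proof -
  have "norm1 (K *v y) = (\<Sum>i\<in>UNIV. \<bar>\<Sum>j\<in>UNIV. K $ i $ j * y $ j\<bar>)"
    unfolding norm1_def matrix_vector_mult_def by simp
  also have "\<dots> \<le> (\<Sum>i\<in>UNIV. \<Sum>j\<in>UNIV. K $ i $ j * \<bar>y $ j\<bar>)"
    using assms unfolding column_stochastic_def
    by (intro sum_mono order_trans[OF sum_abs]) (simp add: abs_mult)
  also have "\<dots> = (\<Sum>j\<in>UNIV. (\<Sum>i\<in>UNIV. K $ i $ j) * \<bar>y $ j\<bar>)"
    by (subst sum.swap) (simp add: sum_distrib_right)
  also have "\<dots> = norm1 y"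
    using assms unfolding column_stochastic_def norm1_def by simp
  finally show ?thesis .
qed

lemma sigma_min_column_stochastic_le_1:
  fixes A :: "real^'n^'m"
  assumes "column_stochastic A"
  shows "sigma_min A \<le> 1"
proof -
  fix j :: 'n
  have "sigma_min A \<le> norm (A *v axis j 1)"
    using sigma_min_mult_norm_le[of A "axis j 1"] by simp
  also have "\<dots> \<le> norm1 (A *v axis j 1)"
    by (rule norm_le_norm1)
  also have "\<dots> \<le> norm1 (axis j 1 :: real^'n)"
    using assms by (rule norm1_column_stochastic_mult_le)
  also have "\<dots> = 1"
    by (simp add: norm1_def axis_def)
  finally show ?thesis .
qed

lemma Zdiag_mult: "Zdiag Z th k ob *v y = (\<chi> s. Z th k s ob * y $ s)"
  by (simp add: Zdiag_def matrix_vector_mult_def vec_eq_iff if_distrib[of "\<lambda>x. x * _"] sum.delta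
      cong: if_cong)

lemma sum_norm1_Zdiag_mult:
  assumes "column_stochastic (Zmat Z th k)"
  shows "(\<Sum>ob\<in>UNIV. norm1 (Zdiag Z th k ob *v y)) = norm1 y"
proof -
  have "(\<Sum>ob\<in>UNIV. norm1 (Zdiag Z th k ob *v y)) = (\<Sum>s\<in>UNIV. (\<Sum>ob\<in>UNIV. Z th k s ob) * \<bar>y $ s\<bar>)"
    using assms unfolding column_stochastic_def Zmat_def norm1_def Zdiag_mult
    by (subst sum.swap) (simp add: abs_mult sum_distrib_right[symmetric])
  also have "\<dots> = norm1 y"
    using assms unfolding column_stochastic_def Zmat_def norm1_def by simp
  finally show ?thesis .
qed

lemma sum_norm1_Tmat_Zdiag_le:
  assumes "\<And>a. column_stochastic (Tmat T th k a)" and "column_stochastic (Zmat Z th k)"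
  shows "(\<Sum>ob\<in>UNIV. norm1 (Tmat T th k (f ob) *v (Zdiag Z th k ob *v y))) \<le> norm1 y"
proof -
  have "(\<Sum>ob\<in>UNIV. norm1 (Tmat T th k (f ob) *v (Zdiag Z th k ob *v y)))
      \<le> (\<Sum>ob\<in>UNIV. norm1 (Zdiag Z th k ob *v y))"
    using assms(1) by (intro sum_mono norm1_column_stochastic_mult_le)
  also have "\<dots> = norm1 y"
    using assms(2) by (rule sum_norm1_Zdiag_mult)
  finally show ?thesis .
qed

lemma sum_lists_length_Suc:
  "(\<Sum>xs\<in>{xs::'b::finite list. length xs = Suc n}. f xs)
    = (\<Sum>x\<in>UNIV. \<Sum>xs\<in>{xs. length xs = n}. f (x # xs))"
proof -
  have eq: "{xs::'b list. length xs = Suc n} = (\<lambda>(x, xs). x # xs) ` (UNIV \<times> {xs. length xs = n})"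
    by (auto simp: length_Suc_conv image_iff)
  have inj: "inj_on (\<lambda>(x::'b, xs). x # xs) (UNIV \<times> {xs. length xs = n})"
    by (auto simp: inj_on_def)
  have "(\<Sum>xs\<in>{xs::'b list. length xs = Suc n}. f xs) = (\<Sum>(x, xs)\<in>UNIV \<times> {xs. length xs = n}. f (x # xs))"
    unfolding eq by (subst sum.reindex[OF inj]) (simp add: case_prod_beta)
  then show ?thesis
    by (simp add: sum.cartesian_product)
qed

lemma pol_prob_nonneg: "0 \<le> pol_prob pol tau"
  unfolding pol_prob_def by (rule prod_nonneg) simp

lemma pol_prob_snoc:
  "pol_prob pol (hist @ [p])
    = (if pol (Suc (length hist)) hist (fst p) = snd p then pol_prob pol hist else 0)"
proof -
  have "pol_prob pol (hist @ [p]) = (if pol (Suc (length hist)) hist (fst p) = snd p then 1 else 0)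
      * (\<Prod>t\<in>{1..length hist}. if pol t (take (t - 1) (hist @ [p])) (fst ((hist @ [p]) ! (t - 1)))
          = snd ((hist @ [p]) ! (t - 1)) then 1 else 0)"
    unfolding pol_prob_def by (simp add: prod.cl_ivl_Suc)
  also have "(\<Prod>t\<in>{1..length hist}. if pol t (take (t - 1) (hist @ [p])) (fst ((hist @ [p]) ! (t - 1)))
      = snd ((hist @ [p]) ! (t - 1)) then 1 else 0) = pol_prob pol hist"
    unfolding pol_prob_def by (rule prod.cong) (auto simp: nth_append)
  finally show ?thesis
    by simp
qed

lemma sum_pol_prob_snoc:
  fixes pol :: "nat \<Rightarrow> ('o::finite \<times> 'a::finite) list \<Rightarrow> 'o \<Rightarrow> 'a"
  shows "(\<Sum>p\<in>UNIV. pol_prob pol (hist @ [p]) * G p)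
    = pol_prob pol hist * (\<Sum>ob\<in>UNIV. G (ob, pol (Suc (length hist)) hist ob))"
proof -
  have "(\<Sum>p\<in>UNIV. pol_prob pol (hist @ [p]) * G p)
      = (\<Sum>ob\<in>UNIV. \<Sum>a\<in>UNIV. pol_prob pol (hist @ [(ob, a)]) * G (ob, a))"
    by (simp add: sum.cartesian_product flip: UNIV_Times_UNIV)
  also have "\<dots> = (\<Sum>ob\<in>UNIV. pol_prob pol hist * G (ob, pol (Suc (length hist)) hist ob))"
    by (simp add: pol_prob_snoc if_distrib[of "\<lambda>x. x * _"] sum.delta cong: if_cong)
  finally show ?thesis
    by (simp add: sum_distrib_left)
qed

fun hidden_prod :: "('p \<Rightarrow> nat \<Rightarrow> 's::finite \<Rightarrow> 'a \<Rightarrow> 's \<Rightarrow> real) \<Rightarrow> ('p \<Rightarrow> nat \<Rightarrow> 's \<Rightarrow> 'o \<Rightarrow> real)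
    \<Rightarrow> 'p \<Rightarrow> nat \<Rightarrow> ('o \<times> 'a) list \<Rightarrow> real^'s^'s" where
  "hidden_prod T Z th t [] = mat 1"
| "hidden_prod T Z th t ((ob, a) # xs) = hidden_prod T Z th (Suc t) xs ** Tmat T th t a ** Zdiag Z th t ob"

lemma Bprod_mult_Zmat:
  fixes T :: "'p \<Rightarrow> nat \<Rightarrow> 's::finite \<Rightarrow> 'a \<Rightarrow> 's \<Rightarrow> real"
    and Z :: "'p \<Rightarrow> nat \<Rightarrow> 's \<Rightarrow> 'o::finite \<Rightarrow> real"
  assumes "\<And>k. t \<le> k \<Longrightarrow> k < t + length xs \<Longrightarrow> pinv (Zmat Z th k) ** Zmat Z th k = mat 1"
  shows "Bprod T Z th t xs ** Zmat Z th t = Zmat Z th (t + length xs) ** hidden_prod T Z th t xs"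
  using assms
proof (induction xs arbitrary: t)
  case Nil
  then show ?case
    by simp
next
  case (Cons p xs)
  obtain ob a where p: "p = (ob, a)"
    by fastforce
  have "pinv (Zmat Z th t) ** Zmat Z th t = mat 1"
    using Cons.prems[of t] by simp
  then have Bop: "Bop T Z th t a ob ** Zmat Z th t = Zmat Z th (Suc t) ** (Tmat T th t a ** Zdiag Z th t ob)"
    unfolding Bop_def by (simp flip: matrix_mul_assoc)
  have IH: "Bprod T Z th (Suc t) xs ** Zmat Z th (Suc t)
      = Zmat Z th (Suc t + length xs) ** hidden_prod T Z th (Suc t) xs"
    using Cons.prems by (intro Cons.IH) auto
  have "Bprod T Z th t (p # xs) ** Zmat Z th t = Bprod T Z th (Suc t) xs ** (Bop T Z th t a ob ** Zmat Z th t)"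
    by (simp add: p flip: matrix_mul_assoc)
  also have "\<dots> = (Bprod T Z th (Suc t) xs ** Zmat Z th (Suc t)) ** (Tmat T th t a ** Zdiag Z th t ob)"
    unfolding Bop by (simp add: matrix_mul_assoc)
  also have "\<dots> = Zmat Z th (t + length (p # xs)) ** hidden_prod T Z th t (p # xs)"
    unfolding IH by (simp add: p matrix_mul_assoc)
  finally show ?case .
qed

lemma Bprod_mult_Zmat_pinv:
  fixes T :: "'p \<Rightarrow> nat \<Rightarrow> 's::finite \<Rightarrow> 'a \<Rightarrow> 's \<Rightarrow> real"
    and Z :: "'p \<Rightarrow> nat \<Rightarrow> 's \<Rightarrow> 'o::finite \<Rightarrow> real"
  assumes "xs \<noteq> []" and "pinv (Zmat Z th t) ** Zmat Z th t = mat 1"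
  shows "Bprod T Z th t xs ** Zmat Z th t ** pinv (Zmat Z th t) = Bprod T Z th t xs"
proof -
  obtain ob a ys where xs: "xs = (ob, a) # ys"
    using assms(1) by (metis list.exhaust surj_pair)
  have "pinv (Zmat Z th t) ** (Zmat Z th t ** Q) = Q" for Q :: "real^'o^'s"
    using assms(2) by (simp add: matrix_mul_assoc)
  then show ?thesis
    by (simp add: xs Bop_def flip: matrix_mul_assoc)
qed

lemma sum_pol_prob_hidden_le:
  fixes T :: "'p \<Rightarrow> nat \<Rightarrow> 's::finite \<Rightarrow> 'a::finite \<Rightarrow> 's \<Rightarrow> real"
    and Z :: "'p \<Rightarrow> nat \<Rightarrow> 's \<Rightarrow> 'o::finite \<Rightarrow> real"
    and pol :: "nat \<Rightarrow> ('o \<times> 'a) list \<Rightarrow> 'o \<Rightarrow> 'a"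
  assumes "\<And>k a. t \<le> k \<Longrightarrow> k < H \<Longrightarrow> column_stochastic (Tmat T th k a)"
    and "\<And>k. t \<le> k \<Longrightarrow> k \<le> H \<Longrightarrow> column_stochastic (Zmat Z th k)"
    and "t + n = Suc H" and "0 < n"
  shows "(\<Sum>xs\<in>{xs. length xs = n}. pol_prob pol (hist @ xs)
      * \<bar>((Zmat Z th H ** hidden_prod T Z th t (butlast xs)) *v y) $ fst (last xs)\<bar>)
    \<le> pol_prob pol hist * norm1 y"
  using assms
proof (induction n arbitrary: t hist y)
  case 0
  then show ?case
    by simp
next
  case (Suc n)
  show ?case
  proof (cases "n = 0")
    case True
    then have "t = H"
      using Suc.prems(3) by simp
    have "(\<Sum>xs\<in>{xs. length xs = Suc n}. pol_prob pol (hist @ xs)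
        * \<bar>((Zmat Z th H ** hidden_prod T Z th t (butlast xs)) *v y) $ fst (last xs)\<bar>)
      = pol_prob pol hist * norm1 (Zmat Z th H *v y)"
      unfolding sum_lists_length_Suc True by (simp add: sum_pol_prob_snoc norm1_def)
    also have "\<dots> \<le> pol_prob pol hist * norm1 y"
      using Suc.prems(2) \<open>t = H\<close>
      by (intro mult_left_mono norm1_column_stochastic_mult_le pol_prob_nonneg) auto
    finally show ?thesis .
  next
    case False
    define y' where "y' p = Tmat T th t (snd p) *v (Zdiag Z th t (fst p) *v y)" for p
    have step: "(\<Sum>xs\<in>{xs. length xs = n}. pol_prob pol (hist @ p # xs)
        * \<bar>((Zmat Z th H ** hidden_prod T Z th t (butlast (p # xs))) *v y) $ fst (last (p # xs))\<bar>)
      \<le> pol_prob pol (hist @ [p]) * norm1 (y' p)" for p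
    proof -
      obtain ob a where p: "p = (ob, a)"
        by fastforce
      have "(\<Sum>xs\<in>{xs. length xs = n}. pol_prob pol (hist @ p # xs)
          * \<bar>((Zmat Z th H ** hidden_prod T Z th t (butlast (p # xs))) *v y) $ fst (last (p # xs))\<bar>)
        = (\<Sum>xs\<in>{xs. length xs = n}. pol_prob pol ((hist @ [p]) @ xs)
          * \<bar>((Zmat Z th H ** hidden_prod T Z th (Suc t) (butlast xs)) *v y' p) $ fst (last xs)\<bar>)"
        using False
        by (intro sum.cong refl) (auto simp: p y'_def matrix_vector_mul_assoc matrix_mul_assoc)
      also have "\<dots> \<le> pol_prob pol (hist @ [p]) * norm1 (y' p)"
        using Suc.prems False by (intro Suc.IH) auto
      finally show ?thesis .
    qed
    have "(\<Sum>xs\<in>{xs. length xs = Suc n}. pol_prob pol (hist @ xs)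
        * \<bar>((Zmat Z th H ** hidden_prod T Z th t (butlast xs)) *v y) $ fst (last xs)\<bar>)
      \<le> (\<Sum>p\<in>UNIV. pol_prob pol (hist @ [p]) * norm1 (y' p))"
      unfolding sum_lists_length_Suc by (intro sum_mono step)
    also have "\<dots> = pol_prob pol hist * (\<Sum>ob\<in>UNIV. norm1 (y' (ob, pol (Suc (length hist)) hist ob)))"
      by (rule sum_pol_prob_snoc)
    also have "\<dots> \<le> pol_prob pol hist * norm1 y"
      unfolding y'_def fst_conv snd_conv using Suc.prems False
      by (intro mult_left_mono sum_norm1_Tmat_Zdiag_le pol_prob_nonneg) auto
    finally show ?thesis .
  qed
qed

lemma Brow_inner: "Brow T Z th h tm \<bullet> w = (Bprod T Z th (Suc h) (butlast tm) *v w) $ fst (last tm)"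
  by (simp add: Brow_def dot_lmul_matrix inner_axis')

lemma sum_pol_prob_Brow_single:
  fixes pol :: "nat \<Rightarrow> ('o::finite \<times> 'a::finite) list \<Rightarrow> 'o \<Rightarrow> 'a"
  shows "(\<Sum>tm\<in>{tm. length tm = Suc 0}. pol_prob pol (hist @ tm) * \<bar>Brow T Z th h tm \<bullet> w\<bar>)
    = pol_prob pol hist * norm1 w"
  unfolding sum_lists_length_Suc by (simp add: Brow_inner sum_pol_prob_snoc norm1_def)

lemma Brow_inner_hidden:
  assumes "Suc 0 < length tm"
    and "\<And>k. h < k \<Longrightarrow> k < h + length tm \<Longrightarrow> pinv (Zmat Z th k) ** Zmat Z th k = mat 1"
  shows "Brow T Z th h tm \<bullet> w = ((Zmat Z th (h + length tm) ** hidden_prod T Z th (Suc h) (butlast tm))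
      *v (pinv (Zmat Z th (Suc h)) *v w)) $ fst (last tm)"
proof -
  have len: "Suc h + length (butlast tm) = h + length tm"
    using assms(1) by simp
  have "butlast tm \<noteq> []"
    using assms(1) by (cases tm rule: rev_cases) auto
  then have "Bprod T Z th (Suc h) (butlast tm)
      = Bprod T Z th (Suc h) (butlast tm) ** Zmat Z th (Suc h) ** pinv (Zmat Z th (Suc h))"
    using assms by (intro Bprod_mult_Zmat_pinv[symmetric]) auto
  also have "Bprod T Z th (Suc h) (butlast tm) ** Zmat Z th (Suc h)
      = Zmat Z th (h + length tm) ** hidden_prod T Z th (Suc h) (butlast tm)"
    using Bprod_mult_Zmat[of "Suc h" "butlast tm" Z th T, unfolded len] assms(2) by (simp add: Suc_le_eq)
  finally show ?thesis
    by (simp add: Brow_inner matrix_vector_mul_assoc)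
qed

lemma sum_pol_prob_Brow_le:
  fixes T :: "'p \<Rightarrow> nat \<Rightarrow> 's::finite \<Rightarrow> 'a::finite \<Rightarrow> 's \<Rightarrow> real"
    and Z :: "'p \<Rightarrow> nat \<Rightarrow> 's \<Rightarrow> 'o::finite \<Rightarrow> real"
    and pol :: "nat \<Rightarrow> ('o \<times> 'a) list \<Rightarrow> 'o \<Rightarrow> 'a"
  assumes "\<And>k a. h < k \<Longrightarrow> k < H \<Longrightarrow> column_stochastic (Tmat T th k a)"
    and "\<And>k. h < k \<Longrightarrow> k \<le> H \<Longrightarrow> column_stochastic (Zmat Z th k)"
    and sigma: "\<And>k. h < k \<Longrightarrow> k \<le> H \<Longrightarrow> alpha \<le> sigma_min (Zmat Z th k)"
    and "0 < alpha" and "Suc h < H"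
  shows "(\<Sum>tm\<in>{tm. length tm = H - h}. pol_prob pol (hist @ tm) * \<bar>Brow T Z th h tm \<bullet> w\<bar>)
    \<le> pol_prob pol hist * (sqrt (real CARD('s)) / alpha * norm1 w)"
proof -
  define x where "x = pinv (Zmat Z th (Suc h)) *v w"
  have "pinv (Zmat Z th k) ** Zmat Z th k = mat 1" if "h < k" "k \<le> H" for k
    using sigma[OF that] \<open>0 < alpha\<close> by (intro pinv_mult_self inj_of_sigma_min_pos) simp
  then have "(\<Sum>tm\<in>{tm. length tm = H - h}. pol_prob pol (hist @ tm) * \<bar>Brow T Z th h tm \<bullet> w\<bar>)
      = (\<Sum>tm\<in>{tm. length tm = H - h}. pol_prob pol (hist @ tm)
          * \<bar>((Zmat Z th H ** hidden_prod T Z th (Suc h) (butlast tm)) *v x) $ fst (last tm)\<bar>)"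
    using \<open>Suc h < H\<close> unfolding x_def by (intro sum.cong refl) (simp add: Brow_inner_hidden)
  also have "\<dots> \<le> pol_prob pol hist * norm1 x"
    using assms by (intro sum_pol_prob_hidden_le) auto
  also have "\<dots> \<le> pol_prob pol hist * (sqrt (real CARD('s)) / alpha * norm1 w)"
    unfolding x_def using assms by (intro mult_left_mono norm1_pinv_le pol_prob_nonneg) auto
  finally show ?thesis .
qed

theorem lemma14:
  fixes T :: "'p \<Rightarrow> nat \<Rightarrow> 's::finite \<Rightarrow> 'a::finite \<Rightarrow> 's \<Rightarrow> real"
    and Z :: "'p \<Rightarrow> nat \<Rightarrow> 's \<Rightarrow> 'o::finite \<Rightarrow> real"
    and Theta :: "'p set"
    and H h :: nat and alpha :: real
    and pol :: "nat \<Rightarrow> ('o \<times> 'a) list \<Rightarrow> 'o \<Rightarrow> 'a"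
    and tauh :: "('o \<times> 'a) list" and th :: 'p and w :: "real^'o"
  assumes T_dist: "\<And>th' k s a s'. th' \<in> Theta \<Longrightarrow> k \<in> {1..<H} \<Longrightarrow> T th' k s a s' \<ge> 0"
    and T_sum: "\<And>th' k s a. th' \<in> Theta \<Longrightarrow> k \<in> {1..<H} \<Longrightarrow> (\<Sum>s'\<in>UNIV. T th' k s a s') = 1"
    and Z_dist: "\<And>th' k s ob. th' \<in> Theta \<Longrightarrow> k \<in> {1..H} \<Longrightarrow> Z th' k s ob \<ge> 0"
    and Z_sum: "\<And>th' k s. th' \<in> Theta \<Longrightarrow> k \<in> {1..H} \<Longrightarrow> (\<Sum>ob\<in>UNIV. Z th' k s ob) = 1"
    and alpha_pos: "alpha > 0"
    and undercomplete: "CARD('o) \<ge> CARD('s)"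
    and revealing: "\<And>th' k. th' \<in> Theta \<Longrightarrow> k \<in> {1..H} \<Longrightarrow> sigma_min (Zmat Z th' k) \<ge> alpha"
    and h_lt: "h < H"
    and tauh_len: "length tauh = h"
    and pol_pos: "pol_prob pol tauh > 0"
    and th_in: "th \<in> Theta"
  shows "(\<Sum>tm\<in>{tm :: ('o \<times> 'a) list. length tm = H - h}.
            pol_cond pol tm tauh * \<bar>Brow T Z th h tm \<bullet> w\<bar>)
         \<le> sqrt (real CARD('s)) / alpha * norm1 w"
proof -
  have Z: "column_stochastic (Zmat Z th k)" if "1 \<le> k" "k \<le> H" for k
    using Z_dist Z_sum th_in that by (simp add: column_stochastic_def Zmat_def)
  have T: "column_stochastic (Tmat T th k a)" if "1 \<le> k" "k < H" for k a
    using T_dist T_sum th_in that by (simp add: column_stochastic_def Tmat_def)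
  have "(\<Sum>tm\<in>{tm. length tm = H - h}. pol_prob pol (tauh @ tm) * \<bar>Brow T Z th h tm \<bullet> w\<bar>)
      \<le> pol_prob pol tauh * (sqrt (real CARD('s)) / alpha * norm1 w)"
  proof (cases "Suc h = H")
    case True
    have "alpha \<le> 1"
      using revealing[OF th_in, of H] sigma_min_column_stochastic_le_1[OF Z, of H] True by simp
    then have "1 \<le> sqrt (real CARD('s)) / alpha"
      using alpha_pos by (simp add: field_simps order_trans[OF _ real_sqrt_ge_1_iff[THEN iffD2]])
    moreover have "0 \<le> norm1 w"
      by (simp add: norm1_def sum_nonneg)
    ultimately have "norm1 w \<le> sqrt (real CARD('s)) / alpha * norm1 w"
      using mult_right_mono by fastforce
    moreover have "H - h = Suc 0"
      using True by simp
    ultimately show ?thesis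
      by (simp only: sum_pol_prob_Brow_single) (rule mult_left_mono[OF _ pol_prob_nonneg])
  next
    case False
    with h_lt show ?thesis
      using T Z revealing[OF th_in] alpha_pos by (intro sum_pol_prob_Brow_le) auto
  qed
  then show ?thesis
    using pol_pos by (simp add: pol_cond_def field_simps flip: sum_divide_distrib)
qed

end
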